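(* Let $N\ge1$, $d_1,d_2,d_3,d_4\ge1$, $\kappa_1,\kappa_2\ge0$, and for $1\le j\le N$ let $B_j\in\mathbb C^{d_1\times d_2\times d_1\times d_2}$, $C_j\in\mathbb C^{d_3\times d_4\times d_3\times d_4}$ satisfy $[B_j]_{\alpha_1\beta_1\alpha_2\beta_2}=-\overline{[B_j]_{\alpha_2\beta_2\alpha_1\beta_1}}$ and $[C_j]_{\gamma_1\delta_1\gamma_2\delta_2}=-\overline{[C_j]_{\gamma_2\delta_2\gamma_1\delta_1}}$. Define $A_j\in\mathbb C^{d_1\times d_2\times d_3\times d_4\times d_1\times d_2\times d_3\times d_4}$ by $$[A_j]_{\alpha_1\beta_1\gamma_1\delta_1\alpha_2\beta_2\gamma_2\delta_2}=[B_j]_{\alpha_1\beta_1\alpha_2\beta_2}\delta_{\gamma_1\gamma_2}\delta_{\delta_1\delta_2}+[C_j]_{\gamma_1\delta_1\gamma_2\delta_2}\delta_{\alpha_1\alpha_2}\delta_{\beta_1\beta_2},$$ and take in the Lohe tensor model (rank $4$) the couplings $\kappa_{(0,1,1,1)}=\kappa_{(1,1,0,1)}=\kappa_1$, $\kappa_{(1,0,1,1)}=\kappa_{(1,1,1,0)}=\kappa_2$, and $\kappa_{i_*}=0$ for all other $i_*\in\{0,1\}^4$. Then: (1) If $\{(U_i,V_i)\}$ is a solution of the double matrix model (with these $B_j,C_j,\kappa_1,\kappa_2$), then $T_i(t):=U_i(t)\otimes V_i(t)$ is a (quadratically separable) solution of the Lohe tensor model with free flow tensors $A_i$. (2) If $\{T_i\}$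 is a solution of the Lohe tensor model with free flow tensors $A_i$ and initial data $T_i(0)=U_i^0\otimes V_i^0$, where $U_i^0\in\mathbb C^{d_1\times d_2}$, $V_i^0\in\mathbb C^{d_3\times d_4}$ have $\|U_i^0\|_F=\|V_i^0\|_F=1$, then there exist matrices $U_i(t)\in\mathbb C^{d_1\times d_2}$, $V_i(t)\in\mathbb C^{d_3\times d_4}$ of unit Frobenius norm with $T_i(t)=U_i(t)\otimes V_i(t)$ for all $t>0$, where $\{(U_i,V_i)\}$ is the solution of the double matrix model with $(U_i,V_i)(0)=(U_i^0,V_i^0)$.
   Context: $\langle A,B\rangle_F=\mathrm{tr}(A^\dagger B)$, $\|A\|_F=\sqrt{\langle A,A\rangle_F}$; $(U\otimes V)$ is the rank-4 tensor with $[U\otimes V]_{\alpha\beta\gamma\delta}=[U]_{\alpha\beta}[V]_{\gamma\delta}$. Repeated indices are summed. Double matrix model: for $U_j\in\mathbb C^{d_1\times d_2}$, $V_j\in\mathbb C^{d_3\times d_4}$, $\dot U_j=B_jU_j+\frac{\kappa_1}{N}\sum_k(\langle V_j,V_k\rangle_FU_kU_j^\dagger U_j-\langle V_k,V_j\rangle_FU_jU_k^\dagger U_j)+\frac{\kappa_2}{N}\sum_k(\langle V_j,V_k\rangle_FU_jU_j^\dagger U_k-\langle V_k,V_j\rangle_FU_jU_k^\dagger U_j)$, $\dot V_j=C_jV_j+\frac{\kappa_1}{N}\sum_k(\langle U_j,U_k\rangle_FV_kV_j^\dagger V_j-\langle U_k,U_j\rangle_FV_jV_k^\dagger V_j)+\frac{\kappa_2}{N}\sum_k(\langle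 U_j,U_k\rangle_FV_jV_j^\dagger V_k-\langle U_k,U_j\rangle_FV_jV_k^\dagger V_j)$, where $[B_jU_j]_{\alpha\beta}=[B_j]_{\alpha\beta\gamma\delta}[U_j]_{\gamma\delta}$, $[C_jV_j]_{\alpha\beta}=[C_j]_{\alpha\beta\gamma\delta}[V_j]_{\gamma\delta}$. Lohe tensor model for rank-$r$ tensors $T_j\in\mathbb C^{e_1\times\cdots\times e_r}$: for $i_*=(i_1,\dots,i_r)\in\{0,1\}^r$ write $\alpha_{*i_*}=(\alpha_{1i_1},\dots,\alpha_{ri_r})$, $\alpha_{*(1-i_* )}=(\alpha_{1(1-i_1)},\dots,\alpha_{r(1-i_r)})$, $\alpha_{*0},\alpha_{*1}$ similarly; with $T_c=\frac1N\sum_kT_k$, nonnegative couplings $\kappa_{i_*}$, and rank-$2r$ tensors $A_j$ with $\overline{[A_j]_{\alpha_{*0}\alpha_{*1}}}=-[A_j]_{\alpha_{*1}\alpha_{*0}}$, $\frac{d}{dt}[T_j]_{\alpha_{*0}}=[A_j]_{\alpha_{*0}\alpha_{*1}}[T_j]_{\alpha_{*1}}+\sum_{i_*\in\{0,1\}^r}\kappa_{i_*}\big([T_c]_{\alpha_{*i_*}}\overline{[T_j]_{\alpha_{*1}}}[T_j]_{\alpha_{*(1-i_* )}}-[T_j]_{\alpha_{*i_*}}\overline{[T_c]_{\alpha_{*1}}}[T_j]_{\alpha_{*(1-i_* )}}\big)$, summing over the indices $\alpha_{*1}$. A quadratically separable state is a solution of the form $T_i=U_i^1\otimes\cdots\otimes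 U_i^m$ with matrices $U_i^k$ of unit Frobenius norm. *)

theory Defs
  imports "HOL-Analysis.Analysis"
begin

text \<open>Matrices in C^(d1 x d2) are functions on finite index types; the
dimensions d_k are the cardinalities of the index types (hence >= 1).
The ensemble of N particles is indexed by a finite type 'n, N = CARD('n).\<close>

type_synonym ('a, 'b) cmat = "'a \<Rightarrow> 'b \<Rightarrow> complex"

definition frob :: "('a::finite, 'b::finite) cmat \<Rightarrow> ('a, 'b) cmat \<Rightarrow> complex" where
  "frob A B = (\<Sum>\<alpha>\<in>UNIV. \<Sum>\<beta>\<in>UNIV. cnj (A \<alpha> \<beta>) * B \<alpha> \<beta>)"

definition frob_norm :: "('a::finite, 'b::finite) cmat \<Rightarrow> real" where
  "frob_norm A = sqrt (Re (frob A A))"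

definition mmul :: "('a, 'b::finite) cmat \<Rightarrow> ('b, 'c) cmat \<Rightarrow> ('a, 'c) cmat" where
  "mmul A B = (\<lambda>i k. \<Sum>j\<in>UNIV. A i j * B j k)"

definition adj :: "('a, 'b) cmat \<Rightarrow> ('b, 'a) cmat" where
  "adj A = (\<lambda>i j. cnj (A j i))"

definition dmm_rhs ::
  "real \<Rightarrow> real \<Rightarrow> ('n::finite \<Rightarrow> 'a::finite \<Rightarrow> 'b::finite \<Rightarrow> 'a \<Rightarrow> 'b \<Rightarrow> complex)
   \<Rightarrow> ('n \<Rightarrow> ('a, 'b) cmat) \<Rightarrow> ('n \<Rightarrow> ('c::finite, 'd::finite) cmat) \<Rightarrow> 'n \<Rightarrow> ('a, 'b) cmat" where
  "dmm_rhs \<kappa>1 \<kappa>2 B U V j = (\<lambda>\<alpha> \<beta>.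
     (\<Sum>\<gamma>\<in>UNIV. \<Sum>\<delta>\<in>UNIV. B j \<alpha> \<beta> \<gamma> \<delta> * U j \<gamma> \<delta>)
   + complex_of_real \<kappa>1 / of_nat CARD('n) *
       (\<Sum>k\<in>UNIV. frob (V j) (V k) * mmul (mmul (U k) (adj (U j))) (U j) \<alpha> \<beta>
                 - frob (V k) (V j) * mmul (mmul (U j) (adj (U k))) (U j) \<alpha> \<beta>)
   + complex_of_real \<kappa>2 / of_nat CARD('n) *
       (\<Sum>k\<in>UNIV. frob (V j) (V k) * mmul (mmul (U j) (adj (U j))) (U k) \<alpha> \<beta>
                 - frob (V k) (V j) * mmul (mmul (U j) (adj (U k))) (U j) \<alpha> \<beta>))"

definition is_dmm_solution ::
  "real \<Rightarrow> real \<Rightarrow> ('n::finite \<Rightarrow> 'a::finite \<Rightarrow> 'b::finite \<Rightarrow> 'a \<Rightarrow> 'b \<Rightarrow> complex)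
   \<Rightarrow> ('n \<Rightarrow> 'c::finite \<Rightarrow> 'd::finite \<Rightarrow> 'c \<Rightarrow> 'd \<Rightarrow> complex)
   \<Rightarrow> ('n \<Rightarrow> real \<Rightarrow> ('a, 'b) cmat) \<Rightarrow> ('n \<Rightarrow> real \<Rightarrow> ('c, 'd) cmat) \<Rightarrow> bool" where
  "is_dmm_solution \<kappa>1 \<kappa>2 B C U V \<longleftrightarrow>
     (\<forall>j t. t \<ge> 0 \<longrightarrow>
        (\<forall>\<alpha> \<beta>. ((\<lambda>s. U j s \<alpha> \<beta>) has_vector_derivative
                  dmm_rhs \<kappa>1 \<kappa>2 B (\<lambda>k. U k t) (\<lambda>k. V k t) j \<alpha> \<beta>) (at t within {0..})) \<and>
        (\<forall>\<gamma> \<delta>. ((\<lambda>s. V j s \<gamma> \<delta>) has_vector_derivative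
                  dmm_rhs \<kappa>1 \<kappa>2 C (\<lambda>k. V k t) (\<lambda>k. U k t) j \<gamma> \<delta>) (at t within {0..})))"

text \<open>Rank-4 tensors; index i \<in> {0,1} encoded as False/True.\<close>
type_synonym ('a, 'b, 'c, 'd) tensor4 = "'a \<Rightarrow> 'b \<Rightarrow> 'c \<Rightarrow> 'd \<Rightarrow> complex"

definition sel :: "bool \<Rightarrow> 'a \<Rightarrow> 'a \<Rightarrow> 'a" where
  "sel i x0 x1 = (if i then x1 else x0)"

definition tprod :: "('a, 'b) cmat \<Rightarrow> ('c, 'd) cmat \<Rightarrow> ('a, 'b, 'c, 'd) tensor4" where
  "tprod U V = (\<lambda>\<alpha> \<beta> \<gamma> \<delta>. U \<alpha> \<beta> * V \<gamma> \<delta>)"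

definition lohe_rhs ::
  "(bool \<Rightarrow> bool \<Rightarrow> bool \<Rightarrow> bool \<Rightarrow> real)
   \<Rightarrow> ('n::finite \<Rightarrow> 'a::finite \<Rightarrow> 'b::finite \<Rightarrow> 'c::finite \<Rightarrow> 'd::finite
                  \<Rightarrow> 'a \<Rightarrow> 'b \<Rightarrow> 'c \<Rightarrow> 'd \<Rightarrow> complex)
   \<Rightarrow> ('n \<Rightarrow> ('a, 'b, 'c, 'd) tensor4) \<Rightarrow> 'n \<Rightarrow> ('a, 'b, 'c, 'd) tensor4" where
  "lohe_rhs \<kappa> A T j = (\<lambda>a1 a2 a3 a4.
     let Tc = (\<lambda>x1 x2 x3 x4. (\<Sum>k\<in>UNIV. T k x1 x2 x3 x4) / of_nat CARD('n)) in
     (\<Sum>b1\<in>UNIV. \<Sum>b2\<in>UNIV. \<Sum>b3\<in>UNIV. \<Sum>b4\<in>UNIV.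
        A j a1 a2 a3 a4 b1 b2 b3 b4 * T j b1 b2 b3 b4)
   + (\<Sum>i1\<in>UNIV. \<Sum>i2\<in>UNIV. \<Sum>i3\<in>UNIV. \<Sum>i4\<in>UNIV.
        complex_of_real (\<kappa> i1 i2 i3 i4) *
        (\<Sum>b1\<in>UNIV. \<Sum>b2\<in>UNIV. \<Sum>b3\<in>UNIV. \<Sum>b4\<in>UNIV.
           Tc (sel i1 a1 b1) (sel i2 a2 b2) (sel i3 a3 b3) (sel i4 a4 b4)
             * cnj (T j b1 b2 b3 b4)
             * T j (sel (\<not> i1) a1 b1) (sel (\<not> i2) a2 b2) (sel (\<not> i3) a3 b3) (sel (\<not> i4) a4 b4)
         - T j (sel i1 a1 b1) (sel i2 a2 b2) (sel i3 a3 b3) (sel i4 a4 b4)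
             * cnj (Tc b1 b2 b3 b4)
             * T j (sel (\<not> i1) a1 b1) (sel (\<not> i2) a2 b2) (sel (\<not> i3) a3 b3) (sel (\<not> i4) a4 b4))))"

definition is_lohe_solution ::
  "(bool \<Rightarrow> bool \<Rightarrow> bool \<Rightarrow> bool \<Rightarrow> real)
   \<Rightarrow> ('n::finite \<Rightarrow> 'a::finite \<Rightarrow> 'b::finite \<Rightarrow> 'c::finite \<Rightarrow> 'd::finite
                  \<Rightarrow> 'a \<Rightarrow> 'b \<Rightarrow> 'c \<Rightarrow> 'd \<Rightarrow> complex)
   \<Rightarrow> ('n \<Rightarrow> real \<Rightarrow> ('a, 'b, 'c, 'd) tensor4) \<Rightarrow> bool" where
  "is_lohe_solution \<kappa> A T \<longleftrightarrow>
     (\<forall>j t. t \<ge> 0 \<longrightarrow> (\<forall>a1 a2 a3 a4.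
        ((\<lambda>s. T j s a1 a2 a3 a4) has_vector_derivative
           lohe_rhs \<kappa> A (\<lambda>k. T k t) j a1 a2 a3 a4) (at t within {0..})))"

definition dmm_kappa :: "real \<Rightarrow> real \<Rightarrow> bool \<Rightarrow> bool \<Rightarrow> bool \<Rightarrow> bool \<Rightarrow> real" where
  "dmm_kappa \<kappa>1 \<kappa>2 i1 i2 i3 i4 =
     (if (i1, i2, i3, i4) = (False, True, True, True) \<or> (i1, i2, i3, i4) = (True, True, False, True)
      then \<kappa>1
      else if (i1, i2, i3, i4) = (True, False, True, True) \<or> (i1, i2, i3, i4) = (True, True, True, False)
      then \<kappa>2 else 0)"

definition dmm_A ::
  "('n \<Rightarrow> 'a \<Rightarrow> 'b \<Rightarrow> 'a \<Rightarrow> 'b \<Rightarrow> complex) \<Rightarrow> ('n \<Rightarrow> 'c \<Rightarrow> 'd \<Rightarrow> 'c \<Rightarrow> 'd \<Rightarrow> complex)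
   \<Rightarrow> 'n \<Rightarrow> 'a \<Rightarrow> 'b \<Rightarrow> 'c \<Rightarrow> 'd \<Rightarrow> 'a \<Rightarrow> 'b \<Rightarrow> 'c \<Rightarrow> 'd \<Rightarrow> complex" where
  "dmm_A B C j a1 b1 c1 d1 a2 b2 c2 d2 =
     B j a1 b1 a2 b2 * (if c1 = c2 then 1 else 0) * (if d1 = d2 then 1 else 0)
   + C j c1 d1 c2 d2 * (if a1 = a2 then 1 else 0) * (if b1 = b2 then 1 else 0)"

end

(*
  Part (1) is a computation: for T_j = U_j (x) V_j the contractions in the Lohe field reduce
  to matrix products weighted by Frobenius inner products, and the field splits by the Leibniz
  rule into U_j' (x) V_j + U_j (x) V_j' with U_j', V_j' the right-hand sides of the double
  matrix model.

  For part (2), freeze the mean field and the conjugated factor of the Lohe field at the given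
  solution T. The field becomes linear in the remaining factor, and the U- and V-equations
  become linear ODEs with continuous coefficients, which have global solutions (Picard
  iteration in a Bielecki-weighted sup norm). By part (1) the product U (x) V solves the same
  linear equation as T, so T = U (x) V by Gronwall uniqueness; then the frozen coefficients are
  those of the double matrix model. The Frobenius norms are conserved because the free flows
  are skew-Hermitian and the coupling terms are antisymmetric.
*)

theory Submission
  imports Defs
begin

section \<open>Linear ODEs on [0, \<infinity>) with continuous coefficients\<close>

lemma has_vector_derivative_integral_atLeast:
  fixes g :: "real \<Rightarrow> 'a::banach"
  assumes "continuous_on {0..} g" "0 \<le> t"
  shows "((\<lambda>u. integral {0..u} g) has_vector_derivative g t) (at t within {0..})"
proof -
  have "continuous_on {0..t+1} g" using assms(1) by (rule continuous_on_subset) auto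
  then have "((\<lambda>u. integral {0..u} g) has_vector_derivative g t) (at t within {0..t+1})"
    by (rule integral_has_vector_derivative) (use assms in auto)
  moreover have "at t within {0..t+1} = at t within {0..}"
    by (rule at_within_nhd[where S="{..<t+1}"]) auto
  ultimately show ?thesis by simp
qed

lemma continuous_on_atLeast_if_derivative:
  fixes f :: "real \<Rightarrow> 'a::real_normed_vector"
  assumes "\<And>t. 0 \<le> t \<Longrightarrow> (f has_vector_derivative f' t) (at t within {0..})"
  shows "continuous_on {0..} f"
  using assms by (auto simp: continuous_on_eq_continuous_within intro: has_vector_derivative_continuous)

lemma norm_matrix_vector_le:
  fixes c :: "'i::finite \<Rightarrow> 'i \<Rightarrow> complex" and v :: "complex^'i"
  shows "norm (\<chi> i. \<Sum>k\<in>UNIV. c i k * v$k) \<le> (\<Sum>i\<in>UNIV. \<Sum>k\<in>UNIV. cmod (c i k)) * norm v"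
proof -
  have "norm (\<chi> i. \<Sum>k\<in>UNIV. c i k * v$k) \<le> (\<Sum>i\<in>UNIV. norm (\<Sum>k\<in>UNIV. c i k * v$k))"
    unfolding norm_vec_def by (rule order_trans[OF L2_set_le_sum]) auto
  also have "\<dots> \<le> (\<Sum>i\<in>UNIV. \<Sum>k\<in>UNIV. cmod (c i k) * norm v)"
    by (intro sum_mono order_trans[OF norm_sum])
       (simp add: norm_mult mult_left_mono Finite_Cartesian_Product.norm_nth_le)
  finally show ?thesis by (simp add: sum_distrib_right)
qed

locale linear_ode =
  fixes L :: "real \<Rightarrow> ('i::finite \<Rightarrow> complex) \<Rightarrow> 'i \<Rightarrow> complex"
  assumes additive: "\<And>t x y. L t (\<lambda>i. x i + y i) = (\<lambda>i. L t x i + L t y i)"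
    and homogeneous: "\<And>t c x. L t (\<lambda>i. c * x i) = (\<lambda>i. c * L t x i)"
    and continuous_on_basis: "\<And>i p. continuous_on {0..} (\<lambda>t. L t (\<lambda>q. of_bool (q = p)) i)"
begin

definition entry :: "real \<Rightarrow> 'i \<Rightarrow> 'i \<Rightarrow> complex" where
  "entry t i p = L t (\<lambda>q. of_bool (q = p)) i"

lemma L_eq_sum_entry: "L t x i = (\<Sum>p\<in>UNIV. entry t i p * x p)"
proof -
  have "L t (\<lambda>q. \<Sum>p\<in>S. x p * of_bool (q = p)) = (\<lambda>i. \<Sum>p\<in>S. entry t i p * x p)"
    if "finite S" for S
    using that
  proof (induction S rule: finite_induct)
    case empty
    show ?case using homogeneous[of t 0 x] by simp
  next
    case (insert p S)
    have "L t (\<lambda>q. \<Sum>p'\<in>insert p S. x p' * of_bool (q = p'))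
        = L t (\<lambda>q. x p * of_bool (q = p) + (\<Sum>p'\<in>S. x p' * of_bool (q = p')))"
      by (simp only: sum.insert[OF insert.hyps])
    also have "\<dots> = (\<lambda>i. x p * entry t i p + (\<Sum>p'\<in>S. entry t i p' * x p'))"
      by (simp only: additive homogeneous insert.IH entry_def)
    finally show ?case by (simp add: insert.hyps mult.commute)
  qed
  moreover have "(\<lambda>q. \<Sum>p\<in>UNIV. x p * of_bool (q = p)) = x"
    by (intro ext) (simp add: Int_def)
  ultimately show ?thesis by (metis finite)
qed

lemma continuous_on_entry: "continuous_on {0..} (\<lambda>t. entry t i p)"
  unfolding entry_def by (rule continuous_on_basis)

definition bound :: "real \<Rightarrow> real" where
  "bound t = 1 + (\<Sum>i\<in>UNIV. \<Sum>p\<in>UNIV. cmod (entry t i p))"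

definition weight :: "real \<Rightarrow> real" where
  "weight t = 2 * integral {0..t} bound"

lemma bound_ge_1: "1 \<le> bound t"
  unfolding bound_def by (simp add: sum_nonneg)

lemma continuous_on_bound: "continuous_on {0..} bound"
  unfolding bound_def by (intro continuous_intros continuous_on_entry)

lemma weight_has_real_derivative:
  "0 \<le> t \<Longrightarrow> (weight has_real_derivative 2 * bound t) (at t within {0..})"
  using has_vector_derivative_integral_atLeast[OF continuous_on_bound]
  unfolding weight_def has_real_derivative_iff_has_vector_derivative[symmetric]
  by (auto intro!: derivative_eq_intros)

lemma continuous_on_weight: "continuous_on {0..} weight"
  using weight_has_real_derivative
  by (auto simp: continuous_on_eq_continuous_within intro: DERIV_continuous)

lemma weight_nonneg: "0 \<le> weight t"
proof -
  have "continuous_on {0..t} bound"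
    using continuous_on_bound by (rule continuous_on_subset) auto
  then have "0 \<le> integral {0..t} bound"
    using bound_ge_1 by (intro integral_nonneg integrable_continuous_interval) (auto intro: order_trans[OF zero_le_one])
  then show ?thesis by (simp add: weight_def)
qed

lemma integral_bound_exp_weight:
  assumes "0 \<le> t"
  shows "integral {0..t} (\<lambda>s. bound s * exp (weight s)) = (exp (weight t) - 1) / 2"
proof -
  have "((\<lambda>s. exp (weight s) / 2) has_vector_derivative bound s * exp (weight s)) (at s within {0..t})"
    if "s \<in> {0..t}" for s
  proof -
    have "((\<lambda>s. exp (weight s) / 2) has_real_derivative exp (weight s) * (2 * bound s) / 2)
          (at s within {0..t})"
      using that by (auto intro!: derivative_eq_intros
                          intro: has_field_derivative_subset[OF weight_has_real_derivative])
    then show ?thesis by (simp add: has_real_derivative_iff_has_vector_derivative mult.commute)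
  qed
  from fundamental_theorem_of_calculus[OF assms this]
  show ?thesis by (simp add: integral_unique weight_def diff_divide_distrib)
qed

lemma L_diff: "L t (\<lambda>i. x i - y i) i = L t x i - L t y i"
  by (simp add: L_eq_sum_entry right_diff_distrib sum_subtractf)

definition solves :: "(real \<Rightarrow> 'i \<Rightarrow> complex) \<Rightarrow> bool" where
  "solves x \<longleftrightarrow>
     (\<forall>t\<ge>0. \<forall>i. ((\<lambda>s. x s i) has_vector_derivative L t (x t) i) (at t within {0..}))"

definition L_vec :: "real \<Rightarrow> complex^'i \<Rightarrow> complex^'i" where
  "L_vec t v = (\<chi> i. \<Sum>p\<in>UNIV. entry t i p * v$p)"

lemma L_vec_nth: "L_vec t v $ i = L t (\<lambda>p. v $ p) i"
  by (subst L_eq_sum_entry) (simp add: L_vec_def)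

lemma norm_L_vec_le: "norm (L_vec t v) \<le> bound t * norm v"
proof -
  have "norm (L_vec t v) \<le> (\<Sum>i\<in>UNIV. \<Sum>p\<in>UNIV. cmod (entry t i p)) * norm v"
    unfolding L_vec_def by (rule norm_matrix_vector_le)
  also have "\<dots> \<le> bound t * norm v"
    unfolding bound_def by (rule mult_right_mono) auto
  finally show ?thesis .
qed

lemma L_vec_diff: "L_vec t v - L_vec t u = L_vec t (v - u)"
  unfolding L_vec_def by (simp add: vec_eq_iff right_diff_distrib sum_subtractf)

lemma norm_integral_weighted_le:
  fixes f :: "real \<Rightarrow> complex^'i"
  assumes "0 \<le> t" "0 \<le> B" "f integrable_on {0..t}"
    and "\<And>s. s \<in> {0..t} \<Longrightarrow> norm (f s) \<le> bound s * exp (weight s) * B"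
  shows "norm (exp (- weight t) *\<^sub>R integral {0..t} f) \<le> B / 2"
proof -
  have "continuous_on {0..t} (\<lambda>s. bound s * exp (weight s) * B)"
    by (intro continuous_intros continuous_on_subset[OF continuous_on_bound]
        continuous_on_subset[OF continuous_on_weight]) auto
  then have "norm (integral {0..t} f) \<le> integral {0..t} (\<lambda>s. bound s * exp (weight s) * B)"
    using assms(4) by (intro integral_norm_bound_integral[OF assms(3)] integrable_continuous_interval) auto
  also have "\<dots> = (exp (weight t) - 1) / 2 * B"
    using integral_bound_exp_weight[OF assms(1)] by simp
  finally have "exp (- weight t) * norm (integral {0..t} f)
      \<le> exp (- weight t) * ((exp (weight t) - 1) / 2 * B)"
    by (rule mult_left_mono) simp
  also have "\<dots> = (1 - exp (- weight t)) * B / 2"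
    by (simp add: field_simps exp_minus)
  also have "\<dots> \<le> B / 2"
    using assms(2) weight_nonneg[of t] by (simp add: mult_left_le_one_le)
  finally show ?thesis by simp
qed

definition integrand :: "(real \<Rightarrow>\<^sub>C (complex^'i)) \<Rightarrow> real \<Rightarrow> complex^'i" where
  "integrand z s = L_vec s (exp (weight s) *\<^sub>R apply_bcontfun z s)"

(* Bielecki's trick: for z = exp (- weight) x the Picard map is a 1/2-contraction in the sup
   norm, because weight' = 2 bound dominates twice the size of the coefficients. *)
definition picard :: "complex^'i \<Rightarrow> (real \<Rightarrow>\<^sub>C (complex^'i)) \<Rightarrow> real \<Rightarrow> complex^'i" where
  "picard x0 z t = exp (- weight (max 0 t)) *\<^sub>R (x0 + integral {0..max 0 t} (integrand z))"

lemma continuous_on_integrand: "continuous_on {0..} (integrand z)"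
  unfolding integrand_def L_vec_def
  by (intro continuous_intros continuous_on_entry continuous_on_weight continuous_on_apply_bcontfun)

lemma integrable_integrand: "integrand z integrable_on {0..t}"
  by (rule integrable_continuous_interval, rule continuous_on_subset[OF continuous_on_integrand]) auto

lemma norm_integrand_diff_le:
  "norm (integrand z s - integrand y s) \<le> bound s * exp (weight s) * dist z y"
proof -
  have "norm (integrand z s - integrand y s)
      = norm (L_vec s (exp (weight s) *\<^sub>R (apply_bcontfun z s - apply_bcontfun y s)))"
    unfolding integrand_def L_vec_diff by (simp add: scaleR_diff_right)
  also have "\<dots> \<le> bound s * (exp (weight s) * norm (apply_bcontfun z s - apply_bcontfun y s))"
    using norm_L_vec_le[of s "exp (weight s) *\<^sub>R (apply_bcontfun z s - apply_bcontfun y s)"]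
    by simp
  also have "\<dots> \<le> bound s * (exp (weight s) * dist z y)"
    using dist_bounded[of z s y] bound_ge_1[of s]
    by (intro mult_left_mono) (auto simp: dist_norm)
  finally show ?thesis by simp
qed

lemma picard_in_bcontfun: "picard x0 z \<in> bcontfun"
proof -
  obtain B where B: "\<And>s. norm (apply_bcontfun z s) \<le> B"
    using bounded_apply_bcontfun[of z] by (auto simp: bounded_iff)
  then have "0 \<le> B" using norm_ge_zero order_trans by blast
  have integrand_le: "norm (integrand z s) \<le> bound s * exp (weight s) * B" for s
  proof -
    have "norm (integrand z s) \<le> bound s * (exp (weight s) * norm (apply_bcontfun z s))"
      using norm_L_vec_le[of s "exp (weight s) *\<^sub>R apply_bcontfun z s"] by (simp add: integrand_def)
    also have "\<dots> \<le> bound s * (exp (weight s) * B)"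
      using B[of s] bound_ge_1[of s] by (intro mult_left_mono) auto
    finally show ?thesis by simp
  qed
  show ?thesis
  proof (rule bcontfun_normI)
    have "continuous_on {0..} (\<lambda>t. exp (- weight t) *\<^sub>R (x0 + integral {0..t} (integrand z)))"
      using has_vector_derivative_integral_atLeast[OF continuous_on_integrand]
      by (intro continuous_intros continuous_on_weight continuous_on_atLeast_if_derivative)
    then show "continuous_on UNIV (picard x0 z)"
      unfolding picard_def
      by (rule continuous_on_compose2[of _ _ _ "max 0", unfolded o_def]) (auto intro!: continuous_intros)
    fix t :: real
    let ?t = "max 0 t"
    have "norm (picard x0 z t) \<le> norm (exp (- weight ?t) *\<^sub>R x0)
        + norm (exp (- weight ?t) *\<^sub>R integral {0..?t} (integrand z))"
      unfolding picard_def scaleR_right_distrib by (rule norm_triangle_ineq)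
    also have "\<dots> \<le> norm x0 + B / 2"
    proof (rule add_mono)
      show "norm (exp (- weight ?t) *\<^sub>R x0) \<le> norm x0"
        using weight_nonneg[of ?t] by (simp add: mult_left_le_one_le)
      show "norm (exp (- weight ?t) *\<^sub>R integral {0..?t} (integrand z)) \<le> B / 2"
        using \<open>0 \<le> B\<close> by (intro norm_integral_weighted_le integrable_integrand integrand_le) auto
    qed
    finally show "norm (picard x0 z t) \<le> norm x0 + B / 2" .
  qed
qed

lemma dist_picard_le:
  "dist (Bcontfun (picard x0 z)) (Bcontfun (picard x0 y)) \<le> 1/2 * dist z y"
proof (rule dist_bound)
  fix t :: real
  let ?t = "max 0 t"
  have "picard x0 z t - picard x0 y t
      = exp (- weight ?t) *\<^sub>R integral {0..?t} (\<lambda>s. integrand z s - integrand y s)"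
    unfolding picard_def
    by (simp add: integral_diff[OF integrable_integrand integrable_integrand]
        scaleR_diff_right scaleR_right_distrib)
  also have "norm \<dots> \<le> dist z y / 2"
    by (intro norm_integral_weighted_le integrable_diff integrable_integrand norm_integrand_diff_le) auto
  finally show "dist (apply_bcontfun (Bcontfun (picard x0 z)) t)
      (apply_bcontfun (Bcontfun (picard x0 y)) t) \<le> 1/2 * dist z y"
    by (simp add: Bcontfun_inverse[OF picard_in_bcontfun] dist_norm)
qed

theorem solution_exists: "\<exists>x. x 0 = x0 \<and> solves x"
proof -
  define xv where "xv = (\<chi> i. x0 i)"
  obtain z where z: "Bcontfun (picard xv z) = z"
    using banach_fix_type[of "1/2" "\<lambda>z. Bcontfun (picard xv z)"] dist_picard_le by auto
  define x where "x t = xv + integral {0..t} (integrand z)" for t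
  have integrand_eq: "integrand z t = L_vec t (x t)" if "0 \<le> t" for t
  proof -
    have "apply_bcontfun z t = picard xv z t"
      using arg_cong[OF z, of apply_bcontfun] by (simp add: Bcontfun_inverse[OF picard_in_bcontfun])
    also have "\<dots> = exp (- weight t) *\<^sub>R x t"
      using that by (simp add: picard_def x_def max_absorb2)
    finally show ?thesis by (simp add: integrand_def flip: exp_add)
  qed
  have x_deriv: "(x has_vector_derivative L_vec t (x t)) (at t within {0..})" if "0 \<le> t" for t
  proof -
    have "(x has_vector_derivative 0 + integrand z t) (at t within {0..})"
      unfolding x_def
      by (intro derivative_intros has_vector_derivative_integral_atLeast continuous_on_integrand that)
    then show ?thesis using integrand_eq[OF that] by simp
  qed
  show ?thesis
  proof (intro exI conjI)
    show "(\<lambda>i. x 0 $ i) = x0" by (simp add: x_def xv_def)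
    show "solves (\<lambda>s i. x s $ i)"
      unfolding solves_def
    proof (intro allI impI)
      fix t :: real and i assume "0 \<le> t"
      from bounded_linear.has_vector_derivative[OF bounded_linear_vec_nth x_deriv[OF \<open>0 \<le> t\<close>]]
      show "((\<lambda>s. x s $ i) has_vector_derivative L t (\<lambda>i. x t $ i) i) (at t within {0..})"
        unfolding L_vec_nth .
    qed
  qed
qed

lemma Re_inner_L_le:
  "Re (\<Sum>i\<in>UNIV. cnj (x i) * L t x i) \<le> bound t * (\<Sum>i\<in>UNIV. (cmod (x i))\<^sup>2)"
proof -
  define \<psi> where "\<psi> = (\<Sum>i\<in>UNIV. (cmod (x i))\<^sup>2)"
  have le_\<psi>: "(cmod (x i))\<^sup>2 \<le> \<psi>" for i
    unfolding \<psi>_def by (rule member_le_sum) auto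
  have "Re (cnj (x i) * L t x i) \<le> (\<Sum>p\<in>UNIV. cmod (entry t i p) * \<psi>)" for i
  proof -
    have "Re (cnj (x i) * L t x i) \<le> cmod (x i) * cmod (L t x i)"
      using complex_Re_le_cmod[of "cnj (x i) * L t x i"] by (simp add: norm_mult)
    also have "\<dots> \<le> cmod (x i) * (\<Sum>p\<in>UNIV. cmod (entry t i p) * cmod (x p))"
      by (subst L_eq_sum_entry, intro mult_left_mono order_trans[OF norm_sum]) (auto simp: norm_mult)
    also have "\<dots> = (\<Sum>p\<in>UNIV. cmod (entry t i p) * (cmod (x i) * cmod (x p)))"
      by (simp add: sum_distrib_left mult_ac)
    also have "\<dots> \<le> (\<Sum>p\<in>UNIV. cmod (entry t i p) * \<psi>)"
    proof (intro sum_mono mult_left_mono)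
      fix p
      have "cmod (x i) * cmod (x p) \<le> ((cmod (x i))\<^sup>2 + (cmod (x p))\<^sup>2) / 2"
        using sum_squares_bound[of "cmod (x i)" "cmod (x p)"] by (simp add: power2_eq_square)
      then show "cmod (x i) * cmod (x p) \<le> \<psi>"
        using le_\<psi>[of i] le_\<psi>[of p] by simp
    qed simp
    finally show ?thesis .
  qed
  then have "Re (\<Sum>i\<in>UNIV. cnj (x i) * L t x i) \<le> (\<Sum>i\<in>UNIV. \<Sum>p\<in>UNIV. cmod (entry t i p) * \<psi>)"
    unfolding Re_sum by (rule sum_mono)
  also have "\<dots> = (\<Sum>i\<in>UNIV. \<Sum>p\<in>UNIV. cmod (entry t i p)) * \<psi>"
    by (simp add: sum_distrib_right)
  also have "\<dots> \<le> bound t * \<psi>"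
    unfolding bound_def \<psi>_def by (intro mult_right_mono) (auto intro: sum_nonneg)
  finally show ?thesis unfolding \<psi>_def .
qed

lemma solution_norm_sq_has_derivative:
  assumes "solves w" "0 \<le> s"
  shows "((\<lambda>s. \<Sum>i\<in>UNIV. (cmod (w s i))\<^sup>2) has_real_derivative
    2 * Re (\<Sum>i\<in>UNIV. cnj (w s i) * L s (w s) i)) (at s within {0..})"
proof -
  have "(\<lambda>s. \<Sum>i\<in>UNIV. (cmod (w s i))\<^sup>2) = (\<lambda>s. Re (\<Sum>i\<in>UNIV. cnj (w s i) * w s i))"
    unfolding cmod_power2 by (simp add: Re_sum power2_eq_square)
  moreover have "((\<lambda>s. \<Sum>i\<in>UNIV. cnj (w s i) * w s i) has_vector_derivative
      (\<Sum>i\<in>UNIV. cnj (w s i) * L s (w s) i + cnj (L s (w s) i) * w s i)) (at s within {0..})"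
    using assms unfolding solves_def by (intro derivative_intros) auto
  moreover have "Re (\<Sum>i\<in>UNIV. cnj (w s i) * L s (w s) i + cnj (L s (w s) i) * w s i)
      = 2 * Re (\<Sum>i\<in>UNIV. cnj (w s i) * L s (w s) i)"
    by (simp add: Re_sum sum.distrib algebra_simps)
  ultimately show ?thesis
    unfolding has_vector_derivative_complex_iff by simp
qed

(* Gronwall: exp (- weight) |w|^2 is nonincreasing. *)
lemma solution_zero:
  assumes "solves w" "w 0 = (\<lambda>i. 0)" "0 \<le> t"
  shows "w t = (\<lambda>i. 0)"
proof -
  define \<psi> where "\<psi> s = (\<Sum>i\<in>UNIV. (cmod (w s i))\<^sup>2)" for s
  define \<phi> where "\<phi> s = exp (- weight s) * \<psi> s" for s
  have \<psi>_deriv: "(\<psi> has_real_derivative 2 * Re (\<Sum>i\<in>UNIV. cnj (w s i) * L s (w s) i))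
      (at s within {0..})" if "0 \<le> s" for s
    unfolding \<psi>_def by (rule solution_norm_sq_has_derivative[OF assms(1) that])
  have \<phi>_deriv: "(\<phi> has_real_derivative exp (- weight s) *
      (2 * Re (\<Sum>i\<in>UNIV. cnj (w s i) * L s (w s) i) - 2 * bound s * \<psi> s)) (at s within {0..})"
    if "0 \<le> s" for s
    unfolding \<phi>_def using that
    by (auto intro!: derivative_eq_intros weight_has_real_derivative \<psi>_deriv simp: algebra_simps)
  have "\<phi> t \<le> \<phi> 0"
  proof (rule DERIV_nonpos_imp_decreasing_open[OF assms(3)])
    fix s :: real assume s: "0 < s" "s < t"
    define R where "R = Re (\<Sum>i\<in>UNIV. cnj (w s i) * L s (w s) i)"
    have "at s within {0..} = at s" by (rule at_within_interior) (use s in auto)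
    then have "DERIV \<phi> s :> exp (- weight s) * (2 * R - 2 * bound s * \<psi> s)"
      using \<phi>_deriv[of s] s unfolding R_def by simp
    moreover have "R \<le> bound s * \<psi> s"
      unfolding R_def \<psi>_def by (rule Re_inner_L_le)
    then have "exp (- weight s) * (2 * R - 2 * bound s * \<psi> s) \<le> 0"
      by (intro mult_nonneg_nonpos) auto
    ultimately show "\<exists>y. DERIV \<phi> s :> y \<and> y \<le> 0" by blast
  next
    have "continuous_on {0..} \<phi>"
      using \<phi>_deriv by (auto simp: continuous_on_eq_continuous_within intro: DERIV_continuous)
    then show "continuous_on {0..t} \<phi>" by (rule continuous_on_subset) auto
  qed
  moreover have "\<phi> 0 = 0" by (simp add: \<phi>_def \<psi>_def assms(2))
  ultimately have "\<psi> t \<le> 0" by (simp add: \<phi>_def mult_le_0_iff)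
  moreover have "0 \<le> \<psi> t" unfolding \<psi>_def by (simp add: sum_nonneg)
  ultimately have "\<psi> t = 0" by (rule antisym)
  then have "(cmod (w t i))\<^sup>2 = 0" for i
    using sum_nonneg_eq_0_iff[of UNIV "\<lambda>i. (cmod (w t i))\<^sup>2"] unfolding \<psi>_def by simp
  then show ?thesis by (simp add: fun_eq_iff)
qed

theorem solution_unique:
  assumes "solves x" "solves y" "x 0 = y 0" "0 \<le> t"
  shows "x t = y t"
proof -
  have "solves (\<lambda>s i. x s i - y s i)"
    unfolding solves_def
  proof (intro allI impI)
    fix s :: real and i assume "0 \<le> s"
    then have "((\<lambda>s. x s i - y s i) has_vector_derivative L s (x s) i - L s (y s) i) (at s within {0..})"
      using assms(1,2) unfolding solves_def by (intro has_vector_derivative_diff) auto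
    then show "((\<lambda>s. x s i - y s i) has_vector_derivative L s (\<lambda>i. x s i - y s i) i) (at s within {0..})"
      by (simp only: L_diff)
  qed
  from solution_zero[OF this _ assms(4)] assms(3) show ?thesis
    by (simp add: fun_eq_iff)
qed

end

section \<open>Identities for the Frobenius inner product\<close>

lemma frob_cnj: "cnj (frob A B) = frob B A"
  unfolding frob_def by (simp add: mult.commute)

lemma frob_add: "frob A (\<lambda>a b. X a b + Y a b) = frob A X + frob A Y"
  unfolding frob_def by (simp add: distrib_left sum.distrib)

lemma frob_diff: "frob A (\<lambda>a b. X a b - Y a b) = frob A X - frob A Y"
  unfolding frob_def by (simp add: right_diff_distrib sum_subtractf)

lemma frob_mult: "frob A (\<lambda>a b. c * X a b) = c * frob A X"
  unfolding frob_def by (simp add: sum_distrib_left mult_ac)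

lemma frob_sum: "frob A (\<lambda>a b. \<Sum>k\<in>S. X k a b) = (\<Sum>k\<in>S. frob A (X k))"
  unfolding frob_def by (simp add: sum_distrib_left) (subst sum.swap, rule sum.cong[OF refl], rule sum.swap)

lemma mmul_assoc: "mmul (mmul A B) C = mmul A (mmul (B::('b::finite,'c::finite) cmat) C)"
  unfolding mmul_def
  by (rule ext, rule ext, simp add: sum_distrib_left sum_distrib_right mult_ac, rule sum.swap)

lemma sum_swap_pairs:
  "(\<Sum>x\<in>A. \<Sum>y\<in>B. \<Sum>z\<in>C. \<Sum>w\<in>D. f x y z w) = (\<Sum>z\<in>C. \<Sum>w\<in>D. \<Sum>x\<in>A. \<Sum>y\<in>B. f x y z w)"
  by (subst sum.swap, subst (2) sum.swap, subst (1 2) sum.swap) (simp add: sum.swap[of _ B])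

lemma sum_swap_13:
  "(\<Sum>x\<in>A. \<Sum>y\<in>B. \<Sum>z\<in>C. \<Sum>w\<in>D. f x y z w) = (\<Sum>z\<in>C. \<Sum>y\<in>B. \<Sum>x\<in>A. \<Sum>w\<in>D. f x y z w)"
  by (subst sum.swap, subst (1 2) sum.swap) (simp add: sum.swap[of _ A])

lemma sum_nested_rotate:
  "(\<Sum>x\<in>A. \<Sum>y\<in>B. \<Sum>z\<in>C. \<Sum>w\<in>D. f x y z w) = (\<Sum>w\<in>D. \<Sum>x\<in>A. \<Sum>y\<in>B. \<Sum>z\<in>C. f x y z w)"
  by (subst sum.swap, subst (2) sum.swap, subst (3) sum.swap) (rule refl)

lemma sum_if_const: "(\<Sum>x\<in>A. if P then f x else 0) = (if P then sum f A else 0)"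
  by simp

lemma frob_mmul_adj_cnj:
  fixes A B :: "('a::finite, 'b::finite) cmat"
  shows "frob A (mmul (mmul A (adj B)) A) = cnj (frob A (mmul (mmul B (adj A)) A))"
proof -
  have "cnj (frob A (mmul (mmul B (adj A)) A)) = (\<Sum>i\<in>UNIV. \<Sum>l\<in>UNIV. \<Sum>m\<in>UNIV. \<Sum>n\<in>UNIV.
     A i l * cnj (B i n) * A m n * cnj (A m l))"
    unfolding frob_def mmul_def adj_def by (simp add: sum_distrib_left sum_distrib_right mult_ac)
  also have "\<dots> = (\<Sum>m\<in>UNIV. \<Sum>l\<in>UNIV. \<Sum>i\<in>UNIV. \<Sum>n\<in>UNIV.
     A i l * cnj (B i n) * A m n * cnj (A m l))"
    by (rule sum_swap_13)
  also have "\<dots> = frob A (mmul (mmul A (adj B)) A)"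
    unfolding frob_def mmul_def adj_def by (simp add: sum_distrib_left sum_distrib_right mult_ac)
  finally show ?thesis by simp
qed

lemma frob_mmul_adj_cycle:
  fixes A B :: "('a::finite, 'b::finite) cmat"
  shows "frob A (mmul (mmul A (adj A)) B) = frob A (mmul (mmul B (adj A)) A)"
proof -
  have "frob A (mmul (mmul B (adj A)) A) = (\<Sum>i\<in>UNIV. \<Sum>l\<in>UNIV. \<Sum>m\<in>UNIV. \<Sum>n\<in>UNIV.
     cnj (A i l) * B i n * cnj (A m n) * A m l)"
    unfolding frob_def mmul_def adj_def by (simp add: sum_distrib_left sum_distrib_right mult_ac)
  also have "\<dots> = (\<Sum>m\<in>UNIV. \<Sum>n\<in>UNIV. \<Sum>i\<in>UNIV. \<Sum>l\<in>UNIV.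
     cnj (A i l) * B i n * cnj (A m n) * A m l)"
    by (rule sum_swap_pairs)
  also have "\<dots> = frob A (mmul (mmul A (adj A)) B)"
    unfolding frob_def mmul_def adj_def by (simp add: sum_distrib_left sum_distrib_right mult_ac)
  finally show ?thesis by simp
qed

lemma Re_frob_skew_hermitian:
  fixes X :: "('a::finite, 'b::finite) cmat"
  assumes "\<And>a1 b1 a2 b2. B a1 b1 a2 b2 = - cnj (B a2 b2 a1 b1)"
  shows "Re (frob X (\<lambda>a1 a2. \<Sum>b1\<in>UNIV. \<Sum>b2\<in>UNIV. B a1 a2 b1 b2 * X b1 b2)) = 0"
proof -
  let ?z = "frob X (\<lambda>a1 a2. \<Sum>b1\<in>UNIV. \<Sum>b2\<in>UNIV. B a1 a2 b1 b2 * X b1 b2)"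
  have "cnj ?z = (\<Sum>a1\<in>UNIV. \<Sum>a2\<in>UNIV. \<Sum>b1\<in>UNIV. \<Sum>b2\<in>UNIV. - (X a1 a2 * B b1 b2 a1 a2 * cnj (X b1 b2)))"
    unfolding frob_def by (subst (2) assms) (simp add: sum_distrib_left mult_ac)
  also have "\<dots> = (\<Sum>b1\<in>UNIV. \<Sum>b2\<in>UNIV. \<Sum>a1\<in>UNIV. \<Sum>a2\<in>UNIV. - (X a1 a2 * B b1 b2 a1 a2 * cnj (X b1 b2)))"
    by (rule sum_swap_pairs)
  also have "\<dots> = - ?z"
    unfolding frob_def by (simp add: sum_distrib_left mult_ac sum_negf)
  finally have "cnj ?z = - ?z" .
  then have "Re (cnj ?z) = Re (- ?z)" by (rule arg_cong)
  then show ?thesis by simp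
qed

lemma Re_frob_dmm_rhs:
  fixes U :: "'n::finite \<Rightarrow> ('a::finite, 'b::finite) cmat" and V :: "'n \<Rightarrow> ('c::finite, 'd::finite) cmat"
  assumes "\<And>j a1 b1 a2 b2. B j a1 b1 a2 b2 = - cnj (B j a2 b2 a1 b1)"
  shows "Re (frob (U j) (dmm_rhs \<kappa>1 \<kappa>2 B U V j)) = 0"
proof -
  define X where "X k = frob (U j) (mmul (mmul (U k) (adj (U j))) (U j))" for k
  define F where "F k = frob (V j) (V k)" for k
  have "frob (U j) (dmm_rhs \<kappa>1 \<kappa>2 B U V j) =
     frob (U j) (\<lambda>a1 a2. \<Sum>b1\<in>UNIV. \<Sum>b2\<in>UNIV. B j a1 a2 b1 b2 * U j b1 b2)
     + complex_of_real \<kappa>1 / of_nat CARD('n) * (\<Sum>k\<in>UNIV. F k * X k - cnj (F k) * cnj (X k))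
     + complex_of_real \<kappa>2 / of_nat CARD('n) * (\<Sum>k\<in>UNIV. F k * X k - cnj (F k) * cnj (X k))"
    unfolding dmm_rhs_def frob_add frob_mult frob_sum frob_diff X_def F_def frob_mmul_adj_cycle
    by (simp add: frob_cnj frob_mmul_adj_cnj[of "U j"])
  moreover have "Re (frob (U j) (\<lambda>a1 a2. \<Sum>b1\<in>UNIV. \<Sum>b2\<in>UNIV. B j a1 a2 b1 b2 * U j b1 b2)) = 0"
    using assms by (rule Re_frob_skew_hermitian)
  ultimately show ?thesis by (simp add: Re_sum Re_divide_of_nat)
qed

section \<open>The Lohe vector field on product tensors\<close>

definition tensor_mean ::
  "('n::finite \<Rightarrow> ('a, 'b, 'c, 'd) tensor4) \<Rightarrow> ('a, 'b, 'c, 'd) tensor4" where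
  "tensor_mean T = (\<lambda>x1 x2 x3 x4. (\<Sum>k\<in>UNIV. T k x1 x2 x3 x4) / of_nat CARD('n))"

(* lohe_rhs with the last factor T j replaced by S j. *)
definition lohe_lin ::
  "(bool \<Rightarrow> bool \<Rightarrow> bool \<Rightarrow> bool \<Rightarrow> real)
   \<Rightarrow> ('n::finite \<Rightarrow> 'a::finite \<Rightarrow> 'b::finite \<Rightarrow> 'c::finite \<Rightarrow> 'd::finite
                  \<Rightarrow> 'a \<Rightarrow> 'b \<Rightarrow> 'c \<Rightarrow> 'd \<Rightarrow> complex)
   \<Rightarrow> ('n \<Rightarrow> ('a, 'b, 'c, 'd) tensor4) \<Rightarrow> ('n \<Rightarrow> ('a, 'b, 'c, 'd) tensor4) \<Rightarrow> 'n \<Rightarrow> ('a, 'b, 'c, 'd) tensor4" where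
  "lohe_lin \<kappa> A T S j = (\<lambda>a1 a2 a3 a4.
     (\<Sum>b1\<in>UNIV. \<Sum>b2\<in>UNIV. \<Sum>b3\<in>UNIV. \<Sum>b4\<in>UNIV.
        A j a1 a2 a3 a4 b1 b2 b3 b4 * S j b1 b2 b3 b4)
   + (\<Sum>i1\<in>UNIV. \<Sum>i2\<in>UNIV. \<Sum>i3\<in>UNIV. \<Sum>i4\<in>UNIV.
        complex_of_real (\<kappa> i1 i2 i3 i4) *
        (\<Sum>b1\<in>UNIV. \<Sum>b2\<in>UNIV. \<Sum>b3\<in>UNIV. \<Sum>b4\<in>UNIV.
           tensor_mean T (sel i1 a1 b1) (sel i2 a2 b2) (sel i3 a3 b3) (sel i4 a4 b4)
             * cnj (T j b1 b2 b3 b4)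
             * S j (sel (\<not> i1) a1 b1) (sel (\<not> i2) a2 b2) (sel (\<not> i3) a3 b3) (sel (\<not> i4) a4 b4)
         - T j (sel i1 a1 b1) (sel i2 a2 b2) (sel i3 a3 b3) (sel i4 a4 b4)
             * cnj (tensor_mean T b1 b2 b3 b4)
             * S j (sel (\<not> i1) a1 b1) (sel (\<not> i2) a2 b2) (sel (\<not> i3) a3 b3) (sel (\<not> i4) a4 b4))))"

lemma lohe_rhs_eq_lohe_lin: "lohe_rhs \<kappa> A T j = lohe_lin \<kappa> A T T j"
  unfolding lohe_rhs_def lohe_lin_def tensor_mean_def Let_def ..

lemma lohe_lin_add:
  "lohe_lin \<kappa> A T (\<lambda>k b1 b2 b3 b4. X k b1 b2 b3 b4 + Y k b1 b2 b3 b4) j a1 a2 a3 a4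
    = lohe_lin \<kappa> A T X j a1 a2 a3 a4 + lohe_lin \<kappa> A T Y j a1 a2 a3 a4"
  unfolding lohe_lin_def by (simp add: sum.distrib sum_subtractf algebra_simps)

lemma lohe_lin_mult:
  "lohe_lin \<kappa> A T (\<lambda>k b1 b2 b3 b4. c * X k b1 b2 b3 b4) j a1 a2 a3 a4
    = c * lohe_lin \<kappa> A T X j a1 a2 a3 a4"
  unfolding lohe_lin_def by (simp add: distrib_left sum_distrib_left right_diff_distrib sum_subtractf mult_ac)

definition mean_gram1 ::
  "('n::finite \<Rightarrow> ('a::finite, 'b::finite, 'c::finite, 'd::finite) tensor4) \<Rightarrow> 'n \<Rightarrow> ('a, 'a) cmat" where
  "mean_gram1 T j a b = (\<Sum>x2\<in>UNIV. \<Sum>x3\<in>UNIV. \<Sum>x4\<in>UNIV.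
     tensor_mean T a x2 x3 x4 * cnj (T j b x2 x3 x4) - T j a x2 x3 x4 * cnj (tensor_mean T b x2 x3 x4))"

definition mean_gram2 ::
  "('n::finite \<Rightarrow> ('a::finite, 'b::finite, 'c::finite, 'd::finite) tensor4) \<Rightarrow> 'n \<Rightarrow> ('b, 'b) cmat" where
  "mean_gram2 T j b a = (\<Sum>x1\<in>UNIV. \<Sum>x3\<in>UNIV. \<Sum>x4\<in>UNIV.
     tensor_mean T x1 a x3 x4 * cnj (T j x1 b x3 x4) - T j x1 a x3 x4 * cnj (tensor_mean T x1 b x3 x4))"

definition mean_gram3 ::
  "('n::finite \<Rightarrow> ('a::finite, 'b::finite, 'c::finite, 'd::finite) tensor4) \<Rightarrow> 'n \<Rightarrow> ('c, 'c) cmat" where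
  "mean_gram3 T j a b = (\<Sum>x1\<in>UNIV. \<Sum>x2\<in>UNIV. \<Sum>x4\<in>UNIV.
     tensor_mean T x1 x2 a x4 * cnj (T j x1 x2 b x4) - T j x1 x2 a x4 * cnj (tensor_mean T x1 x2 b x4))"

definition mean_gram4 ::
  "('n::finite \<Rightarrow> ('a::finite, 'b::finite, 'c::finite, 'd::finite) tensor4) \<Rightarrow> 'n \<Rightarrow> ('d, 'd) cmat" where
  "mean_gram4 T j b a = (\<Sum>x1\<in>UNIV. \<Sum>x2\<in>UNIV. \<Sum>x3\<in>UNIV.
     tensor_mean T x1 x2 x3 a * cnj (T j x1 x2 x3 b) - T j x1 x2 x3 a * cnj (tensor_mean T x1 x2 x3 b))"

definition matrix_field ::
  "real \<Rightarrow> real \<Rightarrow> ('a::finite \<Rightarrow> 'b::finite \<Rightarrow> 'a \<Rightarrow> 'b \<Rightarrow> complex)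
   \<Rightarrow> ('a, 'a) cmat \<Rightarrow> ('b, 'b) cmat \<Rightarrow> ('a, 'b) cmat \<Rightarrow> ('a, 'b) cmat" where
  "matrix_field \<kappa>1 \<kappa>2 Bj P Q X = (\<lambda>a1 a2. (\<Sum>b1\<in>UNIV. \<Sum>b2\<in>UNIV. Bj a1 a2 b1 b2 * X b1 b2)
     + complex_of_real \<kappa>1 * mmul P X a1 a2 + complex_of_real \<kappa>2 * mmul X Q a1 a2)"

abbreviation u_field where
  "u_field \<kappa>1 \<kappa>2 B T j \<equiv> matrix_field \<kappa>1 \<kappa>2 (B j) (mean_gram1 T j) (mean_gram2 T j)"

abbreviation v_field where
  "v_field \<kappa>1 \<kappa>2 C T j \<equiv> matrix_field \<kappa>1 \<kappa>2 (C j) (mean_gram3 T j) (mean_gram4 T j)"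

lemma dmm_A_tprod:
  "(\<Sum>b1\<in>UNIV. \<Sum>b2\<in>UNIV. \<Sum>b3\<in>UNIV. \<Sum>b4\<in>UNIV. dmm_A B C j a1 a2 a3 a4 b1 b2 b3 b4 * tprod X Y b1 b2 b3 b4)
   = (\<Sum>b1\<in>UNIV. \<Sum>b2\<in>UNIV. B j a1 a2 b1 b2 * X b1 b2) * Y a3 a4
     + X a1 a2 * (\<Sum>b3\<in>UNIV. \<Sum>b4\<in>UNIV. C j a3 a4 b3 b4 * Y b3 b4)"
  for X :: "('a::finite, 'b::finite) cmat" and Y :: "('c::finite, 'd::finite) cmat"
  unfolding dmm_A_def tprod_def distrib_right sum.distrib
  by (subst (2) sum_swap_pairs)
     (simp add: mult.assoc if_distrib[of "\<lambda>x. _ * x"] if_distrib[of "\<lambda>x. x * _"] sum.delta sum.delta'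
        sum_if_const sum_distrib_left sum_distrib_right mult_ac cong: if_cong)

lemma lohe_lin_dmm_tprod:
  fixes B :: "'n::finite \<Rightarrow> 'a::finite \<Rightarrow> 'b::finite \<Rightarrow> 'a \<Rightarrow> 'b \<Rightarrow> complex"
    and C :: "'n \<Rightarrow> 'c::finite \<Rightarrow> 'd::finite \<Rightarrow> 'c \<Rightarrow> 'd \<Rightarrow> complex"
  shows "lohe_lin (dmm_kappa \<kappa>1 \<kappa>2) (dmm_A B C) T (\<lambda>k. tprod (U k) (V k)) j a1 a2 a3 a4
   = u_field \<kappa>1 \<kappa>2 B T j (U j) a1 a2 * V j a3 a4 + U j a1 a2 * v_field \<kappa>1 \<kappa>2 C T j (V j) a3 a4"
proof -
  let ?X = "tprod (U j) (V j)"
  have 1: "(\<Sum>b1\<in>UNIV. \<Sum>b2\<in>UNIV. \<Sum>b3\<in>UNIV. \<Sum>b4\<in>UNIV.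
     tensor_mean T a1 b2 b3 b4 * cnj (T j b1 b2 b3 b4) * ?X b1 a2 a3 a4 -
     T j a1 b2 b3 b4 * cnj (tensor_mean T b1 b2 b3 b4) * ?X b1 a2 a3 a4)
    = mmul (mean_gram1 T j) (U j) a1 a2 * V j a3 a4"
    unfolding mean_gram1_def tprod_def mmul_def
    by (simp only: sum_distrib_left sum_distrib_right left_diff_distrib right_diff_distrib) (simp add: mult_ac)
  have 2: "(\<Sum>b1\<in>UNIV. \<Sum>b2\<in>UNIV. \<Sum>b3\<in>UNIV. \<Sum>b4\<in>UNIV.
     tensor_mean T b1 a2 b3 b4 * cnj (T j b1 b2 b3 b4) * ?X a1 b2 a3 a4 -
     T j b1 a2 b3 b4 * cnj (tensor_mean T b1 b2 b3 b4) * ?X a1 b2 a3 a4)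
    = mmul (U j) (mean_gram2 T j) a1 a2 * V j a3 a4"
    unfolding mean_gram2_def tprod_def mmul_def
    by (subst sum.swap) (simp only: sum_distrib_left sum_distrib_right left_diff_distrib right_diff_distrib, simp add: mult_ac)
  have 3: "(\<Sum>b1\<in>UNIV. \<Sum>b2\<in>UNIV. \<Sum>b3\<in>UNIV. \<Sum>b4\<in>UNIV.
     tensor_mean T b1 b2 a3 b4 * cnj (T j b1 b2 b3 b4) * ?X a1 a2 b3 a4 -
     T j b1 b2 a3 b4 * cnj (tensor_mean T b1 b2 b3 b4) * ?X a1 a2 b3 a4)
    = U j a1 a2 * mmul (mean_gram3 T j) (V j) a3 a4"
    unfolding mean_gram3_def tprod_def mmul_def
    by (subst sum_swap_13, subst (2) sum.swap)
       (simp only: sum_distrib_left sum_distrib_right left_diff_distrib right_diff_distrib, simp add: mult_ac)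
  have 4: "(\<Sum>b1\<in>UNIV. \<Sum>b2\<in>UNIV. \<Sum>b3\<in>UNIV. \<Sum>b4\<in>UNIV.
     tensor_mean T b1 b2 b3 a4 * cnj (T j b1 b2 b3 b4) * ?X a1 a2 a3 b4 -
     T j b1 b2 b3 a4 * cnj (tensor_mean T b1 b2 b3 b4) * ?X a1 a2 a3 b4)
    = U j a1 a2 * mmul (V j) (mean_gram4 T j) a3 a4"
    unfolding mean_gram4_def tprod_def mmul_def
    by (subst sum_nested_rotate)
       (simp only: sum_distrib_left sum_distrib_right left_diff_distrib right_diff_distrib, simp add: mult_ac)
  show ?thesis
    unfolding lohe_lin_def
    by (simp add: UNIV_bool dmm_kappa_def sel_def dmm_A_tprod 1 2 3 4)
       (simp add: matrix_field_def algebra_simps)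
qed

(* Pull the average over k out of the three contracted indices; each summand then factors into
   a matrix product times a Frobenius inner product. *)
lemma mean_gram1_tprod:
  fixes U :: "'n::finite \<Rightarrow> ('a::finite, 'b::finite) cmat" and V :: "'n \<Rightarrow> ('c::finite, 'd::finite) cmat"
  shows "mean_gram1 (\<lambda>k. tprod (U k) (V k)) j = (\<lambda>a b. (\<Sum>k\<in>UNIV.
     frob (V j) (V k) * mmul (U k) (adj (U j)) a b - frob (V k) (V j) * mmul (U j) (adj (U k)) a b)
     / of_nat CARD('n))"
  unfolding mean_gram1_def tensor_mean_def tprod_def
  apply (intro ext)
  apply (simp only: cnj_sum complex_cnj_divide complex_cnj_of_nat complex_cnj_mult sum_divide_distrib
      sum_distrib_left sum_distrib_right flip: sum_subtractf)
  apply (subst sum_nested_rotate)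
  apply (simp only: mult.commute[of "frob _ _"])
  apply (simp only: mmul_def adj_def frob_def sum_distrib_right)
  apply (simp only: sum_distrib_left)
  apply (simp add: sum_divide_distrib diff_divide_distrib sum_subtractf mult_ac)
  done

lemma mean_gram2_tprod:
  fixes U :: "'n::finite \<Rightarrow> ('a::finite, 'b::finite) cmat" and V :: "'n \<Rightarrow> ('c::finite, 'd::finite) cmat"
  shows "mean_gram2 (\<lambda>k. tprod (U k) (V k)) j = (\<lambda>b a. (\<Sum>k\<in>UNIV.
     frob (V j) (V k) * mmul (adj (U j)) (U k) b a - frob (V k) (V j) * mmul (adj (U k)) (U j) b a)
     / of_nat CARD('n))"
  unfolding mean_gram2_def tensor_mean_def tprod_def
  apply (intro ext)
  apply (simp only: cnj_sum complex_cnj_divide complex_cnj_of_nat complex_cnj_mult sum_divide_distrib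
      sum_distrib_left sum_distrib_right flip: sum_subtractf)
  apply (subst sum_nested_rotate)
  apply (simp only: mult.commute[of "frob _ _"])
  apply (simp only: mmul_def adj_def frob_def sum_distrib_right)
  apply (simp only: sum_distrib_left)
  apply (simp add: sum_divide_distrib diff_divide_distrib sum_subtractf mult_ac)
  done

lemma mean_gram3_tprod:
  fixes U :: "'n::finite \<Rightarrow> ('a::finite, 'b::finite) cmat" and V :: "'n \<Rightarrow> ('c::finite, 'd::finite) cmat"
  shows "mean_gram3 (\<lambda>k. tprod (U k) (V k)) j = (\<lambda>a b. (\<Sum>k\<in>UNIV.
     frob (U j) (U k) * mmul (V k) (adj (V j)) a b - frob (U k) (U j) * mmul (V j) (adj (V k)) a b)
     / of_nat CARD('n))"
  unfolding mean_gram3_def tensor_mean_def tprod_def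
  apply (intro ext)
  apply (simp only: cnj_sum complex_cnj_divide complex_cnj_of_nat complex_cnj_mult sum_divide_distrib
      sum_distrib_left sum_distrib_right flip: sum_subtractf)
  apply (subst sum_nested_rotate)
  apply (simp only: mmul_def adj_def frob_def sum_distrib_right)
  apply (simp only: sum_distrib_left)
  apply (simp add: sum_divide_distrib diff_divide_distrib sum_subtractf mult_ac)
  done

lemma mean_gram4_tprod:
  fixes U :: "'n::finite \<Rightarrow> ('a::finite, 'b::finite) cmat" and V :: "'n \<Rightarrow> ('c::finite, 'd::finite) cmat"
  shows "mean_gram4 (\<lambda>k. tprod (U k) (V k)) j = (\<lambda>b a. (\<Sum>k\<in>UNIV.
     frob (U j) (U k) * mmul (adj (V j)) (V k) b a - frob (U k) (U j) * mmul (adj (V k)) (V j) b a)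
     / of_nat CARD('n))"
  unfolding mean_gram4_def tensor_mean_def tprod_def
  apply (intro ext)
  apply (simp only: cnj_sum complex_cnj_divide complex_cnj_of_nat complex_cnj_mult sum_divide_distrib
      sum_distrib_left sum_distrib_right flip: sum_subtractf)
  apply (subst sum_nested_rotate)
  apply (simp only: mmul_def adj_def frob_def sum_distrib_right)
  apply (simp only: sum_distrib_left)
  apply (simp add: sum_divide_distrib diff_divide_distrib sum_subtractf mult_ac)
  done

lemma mmul_mean_left:
  "mmul (\<lambda>a b. (\<Sum>k\<in>K. c k * P k a b - d k * Q k a b) / N) Z a e
   = (\<Sum>k\<in>K. c k * mmul (P k) Z a e - d k * mmul (Q k) Z a e) / N"
  unfolding mmul_def
  by (simp add: sum_divide_distrib sum_distrib_left sum_distrib_right sum_subtractf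
      diff_divide_distrib sum.swap[where A = UNIV and B = K] algebra_simps)

lemma mmul_mean_right:
  "mmul Z (\<lambda>b e. (\<Sum>k\<in>K. c k * P k b e - d k * Q k b e) / N) a e
   = (\<Sum>k\<in>K. c k * mmul Z (P k) a e - d k * mmul Z (Q k) a e) / N"
  unfolding mmul_def
  by (simp add: sum_divide_distrib sum_distrib_left sum_distrib_right sum_subtractf
      diff_divide_distrib sum.swap[where A = UNIV and B = K] algebra_simps)

lemma u_field_tprod:
  fixes U :: "'n::finite \<Rightarrow> ('a::finite, 'b::finite) cmat" and V :: "'n \<Rightarrow> ('c::finite, 'd::finite) cmat"
  shows "u_field \<kappa>1 \<kappa>2 B (\<lambda>k. tprod (U k) (V k)) j (U j) = dmm_rhs \<kappa>1 \<kappa>2 B U V j"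
  unfolding matrix_field_def dmm_rhs_def mean_gram1_tprod mean_gram2_tprod mmul_mean_left mmul_mean_right
    mmul_assoc
  by simp

lemma v_field_tprod:
  fixes U :: "'n::finite \<Rightarrow> ('a::finite, 'b::finite) cmat" and V :: "'n \<Rightarrow> ('c::finite, 'd::finite) cmat"
  shows "v_field \<kappa>1 \<kappa>2 C (\<lambda>k. tprod (U k) (V k)) j (V j) = dmm_rhs \<kappa>1 \<kappa>2 C V U j"
  unfolding matrix_field_def dmm_rhs_def mean_gram3_tprod mean_gram4_tprod mmul_mean_left mmul_mean_right
    mmul_assoc
  by simp

section \<open>Separable solutions\<close>

definition matrix_field_solution ::
  "real \<Rightarrow> real \<Rightarrow> ('n \<Rightarrow> 'a::finite \<Rightarrow> 'b::finite \<Rightarrow> 'a \<Rightarrow> 'b \<Rightarrow> complex)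
   \<Rightarrow> ('n \<Rightarrow> real \<Rightarrow> ('a, 'a) cmat) \<Rightarrow> ('n \<Rightarrow> real \<Rightarrow> ('b, 'b) cmat) \<Rightarrow> ('n \<Rightarrow> real \<Rightarrow> ('a, 'b) cmat) \<Rightarrow> bool" where
  "matrix_field_solution \<kappa>1 \<kappa>2 B P Q X \<longleftrightarrow>
     (\<forall>j t. t \<ge> 0 \<longrightarrow> (\<forall>a1 a2. ((\<lambda>s. X j s a1 a2) has_vector_derivative
        matrix_field \<kappa>1 \<kappa>2 (B j) (P j t) (Q j t) (X j t) a1 a2) (at t within {0..})))"

definition lohe_lin_solution ::
  "(bool \<Rightarrow> bool \<Rightarrow> bool \<Rightarrow> bool \<Rightarrow> real)
   \<Rightarrow> ('n::finite \<Rightarrow> 'a::finite \<Rightarrow> 'b::finite \<Rightarrow> 'c::finite \<Rightarrow> 'd::finite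
                  \<Rightarrow> 'a \<Rightarrow> 'b \<Rightarrow> 'c \<Rightarrow> 'd \<Rightarrow> complex)
   \<Rightarrow> ('n \<Rightarrow> real \<Rightarrow> ('a, 'b, 'c, 'd) tensor4) \<Rightarrow> ('n \<Rightarrow> real \<Rightarrow> ('a, 'b, 'c, 'd) tensor4) \<Rightarrow> bool" where
  "lohe_lin_solution \<kappa> A T S \<longleftrightarrow>
     (\<forall>j t. t \<ge> 0 \<longrightarrow> (\<forall>a1 a2 a3 a4. ((\<lambda>s. S j s a1 a2 a3 a4) has_vector_derivative
        lohe_lin \<kappa> A (\<lambda>k. T k t) (\<lambda>k. S k t) j a1 a2 a3 a4) (at t within {0..})))"

lemma is_lohe_solution_iff: "is_lohe_solution \<kappa> A T \<longleftrightarrow> lohe_lin_solution \<kappa> A T T"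
  unfolding is_lohe_solution_def lohe_lin_solution_def lohe_rhs_eq_lohe_lin ..

definition matrix_field_flat ::
  "real \<Rightarrow> real \<Rightarrow> ('n \<Rightarrow> 'a \<Rightarrow> 'b \<Rightarrow> 'a \<Rightarrow> 'b \<Rightarrow> complex) \<Rightarrow> ('n \<Rightarrow> real \<Rightarrow> ('a::finite, 'a) cmat)
   \<Rightarrow> ('n \<Rightarrow> real \<Rightarrow> ('b::finite, 'b) cmat) \<Rightarrow> real \<Rightarrow> ('n \<times> 'a \<times> 'b \<Rightarrow> complex) \<Rightarrow> 'n \<times> 'a \<times> 'b \<Rightarrow> complex" where
  "matrix_field_flat \<kappa>1 \<kappa>2 B P Q t x = (\<lambda>(j, a1, a2).
     matrix_field \<kappa>1 \<kappa>2 (B j) (P j t) (Q j t) (\<lambda>b1 b2. x (j, b1, b2)) a1 a2)"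

definition lohe_lin_flat ::
  "(bool \<Rightarrow> bool \<Rightarrow> bool \<Rightarrow> bool \<Rightarrow> real)
   \<Rightarrow> ('n::finite \<Rightarrow> 'a::finite \<Rightarrow> 'b::finite \<Rightarrow> 'c::finite \<Rightarrow> 'd::finite
                  \<Rightarrow> 'a \<Rightarrow> 'b \<Rightarrow> 'c \<Rightarrow> 'd \<Rightarrow> complex)
   \<Rightarrow> ('n \<Rightarrow> real \<Rightarrow> ('a, 'b, 'c, 'd) tensor4) \<Rightarrow> real
   \<Rightarrow> ('n \<times> 'a \<times> 'b \<times> 'c \<times> 'd \<Rightarrow> complex) \<Rightarrow> 'n \<times> 'a \<times> 'b \<times> 'c \<times> 'd \<Rightarrow> complex" where
  "lohe_lin_flat \<kappa> A T t x = (\<lambda>(j, a1, a2, a3, a4).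
     lohe_lin \<kappa> A (\<lambda>k. T k t) (\<lambda>k b1 b2 b3 b4. x (k, b1, b2, b3, b4)) j a1 a2 a3 a4)"

lemma linear_ode_matrix_field_flat:
  assumes "\<And>j a b. continuous_on {0..} (\<lambda>t. P j t a b)" "\<And>j a b. continuous_on {0..} (\<lambda>t. Q j t a b)"
  shows "linear_ode (matrix_field_flat \<kappa>1 \<kappa>2 B P Q)"
proof
  fix t x y
  show "matrix_field_flat \<kappa>1 \<kappa>2 B P Q t (\<lambda>i. x i + y i)
      = (\<lambda>i. matrix_field_flat \<kappa>1 \<kappa>2 B P Q t x i + matrix_field_flat \<kappa>1 \<kappa>2 B P Q t y i)"
    by (auto simp: matrix_field_flat_def matrix_field_def mmul_def algebra_simps sum.distrib)
  fix c
  show "matrix_field_flat \<kappa>1 \<kappa>2 B P Q t (\<lambda>i. c * x i) = (\<lambda>i. c * matrix_field_flat \<kappa>1 \<kappa>2 B P Q t x i)"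
    by (auto simp: matrix_field_flat_def matrix_field_def mmul_def distrib_left sum_distrib_left mult_ac)
next
  fix i p
  show "continuous_on {0..} (\<lambda>t. matrix_field_flat \<kappa>1 \<kappa>2 B P Q t (\<lambda>q. of_bool (q = p)) i)"
    unfolding matrix_field_flat_def matrix_field_def mmul_def split_beta
    by (intro continuous_intros assms)
qed

lemma linear_ode_lohe_lin_flat:
  assumes "\<And>j a1 a2 a3 a4. continuous_on {0..} (\<lambda>t. T j t a1 a2 a3 a4)"
  shows "linear_ode (lohe_lin_flat \<kappa> A T)"
proof
  fix t x y
  show "lohe_lin_flat \<kappa> A T t (\<lambda>i. x i + y i) = (\<lambda>i. lohe_lin_flat \<kappa> A T t x i + lohe_lin_flat \<kappa> A T t y i)"
    by (auto simp: lohe_lin_flat_def lohe_lin_add)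
  fix c
  show "lohe_lin_flat \<kappa> A T t (\<lambda>i. c * x i) = (\<lambda>i. c * lohe_lin_flat \<kappa> A T t x i)"
    by (auto simp: lohe_lin_flat_def lohe_lin_mult)
next
  fix i p
  show "continuous_on {0..} (\<lambda>t. lohe_lin_flat \<kappa> A T t (\<lambda>q. of_bool (q = p)) i)"
    unfolding lohe_lin_flat_def lohe_lin_def tensor_mean_def split_beta
    by (intro continuous_intros assms) auto
qed

lemma matrix_field_solution_exists:
  fixes B :: "'n::finite \<Rightarrow> 'a::finite \<Rightarrow> 'b::finite \<Rightarrow> 'a \<Rightarrow> 'b \<Rightarrow> complex"
  assumes "\<And>j a b. continuous_on {0..} (\<lambda>t. P j t a b)" "\<And>j a b. continuous_on {0..} (\<lambda>t. Q j t a b)"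
  obtains X where "\<And>j. X j 0 = X0 j" "matrix_field_solution \<kappa>1 \<kappa>2 B P Q X"
proof -
  interpret linear_ode "matrix_field_flat \<kappa>1 \<kappa>2 B P Q"
    using assms by (rule linear_ode_matrix_field_flat)
  obtain x where x0: "x 0 = (\<lambda>(j, a, b). X0 j a b)" and x: "solves x"
    using solution_exists by blast
  have "matrix_field_solution \<kappa>1 \<kappa>2 B P Q (\<lambda>j s a b. x s (j, a, b))"
    unfolding matrix_field_solution_def
  proof (intro allI impI)
    fix j t a1 a2 assume "0 \<le> (t::real)"
    then show "((\<lambda>s. x s (j, a1, a2)) has_vector_derivative
        matrix_field \<kappa>1 \<kappa>2 (B j) (P j t) (Q j t) (\<lambda>a b. x t (j, a, b)) a1 a2) (at t within {0..})"
      using x unfolding solves_def matrix_field_flat_def by auto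
  qed
  with x0 show ?thesis by (intro that[of "\<lambda>j s a b. x s (j, a, b)"]) auto
qed

lemma lohe_lin_solution_unique:
  fixes T :: "'n::finite \<Rightarrow> real \<Rightarrow> ('a::finite, 'b::finite, 'c::finite, 'd::finite) tensor4"
  assumes "\<And>j a1 a2 a3 a4. continuous_on {0..} (\<lambda>t. T j t a1 a2 a3 a4)"
    and "lohe_lin_solution \<kappa> A T S1" "lohe_lin_solution \<kappa> A T S2"
    and "\<And>j. S1 j 0 = S2 j 0" "0 \<le> t"
  shows "S1 j t = S2 j t"
proof -
  interpret linear_ode "lohe_lin_flat \<kappa> A T"
    using assms(1) by (rule linear_ode_lohe_lin_flat)
  define flat where "flat S s = (\<lambda>(j, a1, a2, a3, a4). S j s a1 a2 a3 a4)"
    for S :: "'n \<Rightarrow> real \<Rightarrow> ('a, 'b, 'c, 'd) tensor4" and s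
  have solves_flat: "solves (flat S)" if "lohe_lin_solution \<kappa> A T S" for S
    unfolding solves_def
  proof (intro allI impI)
    fix t :: real and i :: "'n \<times> 'a \<times> 'b \<times> 'c \<times> 'd" assume "0 \<le> t"
    obtain j a1 a2 a3 a4 where "i = (j, a1, a2, a3, a4)" by (cases i) auto
    then show "((\<lambda>s. flat S s i) has_vector_derivative lohe_lin_flat \<kappa> A T t (flat S t) i) (at t within {0..})"
      using that \<open>0 \<le> t\<close> by (simp add: lohe_lin_solution_def lohe_lin_flat_def flat_def)
  qed
  have "flat S1 0 = flat S2 0"
    using assms(4) by (simp add: flat_def)
  then have "flat S1 t = flat S2 t"
    by (rule solution_unique[OF solves_flat[OF assms(2)] solves_flat[OF assms(3)] _ assms(5)])
  then have "flat S1 t (j, a1, a2, a3, a4) = flat S2 t (j, a1, a2, a3, a4)" for a1 a2 a3 a4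
    by simp
  then show ?thesis
    by (intro ext) (simp add: flat_def)
qed

lemma continuous_on_lohe_solution:
  "is_lohe_solution \<kappa> A T \<Longrightarrow> continuous_on {0..} (\<lambda>t. T j t a1 a2 a3 a4)"
  unfolding is_lohe_solution_def by (rule continuous_on_atLeast_if_derivative) blast

lemma continuous_on_mean_grams:
  fixes T :: "'n::finite \<Rightarrow> real \<Rightarrow> ('a::finite, 'b::finite, 'c::finite, 'd::finite) tensor4"
  assumes "\<And>j a1 a2 a3 a4. continuous_on S (\<lambda>t. T j t a1 a2 a3 a4)"
  shows "continuous_on S (\<lambda>t. mean_gram1 (\<lambda>k. T k t) j a b)"
    and "continuous_on S (\<lambda>t. mean_gram2 (\<lambda>k. T k t) j b' a')"
    and "continuous_on S (\<lambda>t. mean_gram3 (\<lambda>k. T k t) j c d)"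
    and "continuous_on S (\<lambda>t. mean_gram4 (\<lambda>k. T k t) j d' c')"
  unfolding mean_gram1_def mean_gram2_def mean_gram3_def mean_gram4_def tensor_mean_def
  by (intro continuous_intros assms; simp)+

lemma tprod_lohe_lin_solution:
  fixes B :: "'n::finite \<Rightarrow> 'a::finite \<Rightarrow> 'b::finite \<Rightarrow> 'a \<Rightarrow> 'b \<Rightarrow> complex"
    and C :: "'n \<Rightarrow> 'c::finite \<Rightarrow> 'd::finite \<Rightarrow> 'c \<Rightarrow> 'd \<Rightarrow> complex"
  assumes "matrix_field_solution \<kappa>1 \<kappa>2 B (\<lambda>j t. mean_gram1 (\<lambda>k. T k t) j) (\<lambda>j t. mean_gram2 (\<lambda>k. T k t) j) U"
    and "matrix_field_solution \<kappa>1 \<kappa>2 C (\<lambda>j t. mean_gram3 (\<lambda>k. T k t) j) (\<lambda>j t. mean_gram4 (\<lambda>k. T k t) j) V"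
  shows "lohe_lin_solution (dmm_kappa \<kappa>1 \<kappa>2) (dmm_A B C) T (\<lambda>j t. tprod (U j t) (V j t))"
  unfolding lohe_lin_solution_def lohe_lin_dmm_tprod
proof (intro allI impI)
  fix j t a1 a2 a3 a4 assume "0 \<le> (t::real)"
  with assms have "((\<lambda>s. U j s a1 a2) has_vector_derivative u_field \<kappa>1 \<kappa>2 B (\<lambda>k. T k t) j (U j t) a1 a2)
      (at t within {0..})" "((\<lambda>s. V j s a3 a4) has_vector_derivative v_field \<kappa>1 \<kappa>2 C (\<lambda>k. T k t) j (V j t) a3 a4)
      (at t within {0..})"
    unfolding matrix_field_solution_def by blast+
  from has_vector_derivative_mult[OF this]
  show "((\<lambda>s. tprod (U j s) (V j s) a1 a2 a3 a4) has_vector_derivative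
      u_field \<kappa>1 \<kappa>2 B (\<lambda>k. T k t) j (U j t) a1 a2 * V j t a3 a4
      + U j t a1 a2 * v_field \<kappa>1 \<kappa>2 C (\<lambda>k. T k t) j (V j t) a3 a4) (at t within {0..})"
    by (simp add: tprod_def add.commute)
qed

lemma Re_frob_self_constant:
  fixes X :: "real \<Rightarrow> ('a::finite, 'b::finite) cmat"
  assumes "\<And>t a b. 0 \<le> t \<Longrightarrow> ((\<lambda>s. X s a b) has_vector_derivative D t a b) (at t within {0..})"
    and "\<And>t. 0 \<le> t \<Longrightarrow> Re (frob (X t) (D t)) = 0" and "0 \<le> t"
  shows "Re (frob (X t) (X t)) = Re (frob (X 0) (X 0))"
proof -
  have "((\<lambda>s. Re (frob (X s) (X s))) has_field_derivative 0) (at s within {0..})" if "s \<in> {0..}" for s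
  proof -
    have "((\<lambda>s. frob (X s) (X s)) has_vector_derivative
        (\<Sum>a\<in>UNIV. \<Sum>b\<in>UNIV. cnj (X s a b) * D s a b + cnj (D s a b) * X s a b)) (at s within {0..})"
      unfolding frob_def using that by (intro derivative_intros assms(1)) auto
    moreover have "(\<Sum>a\<in>UNIV. \<Sum>b\<in>UNIV. cnj (X s a b) * D s a b + cnj (D s a b) * X s a b)
        = frob (X s) (D s) + cnj (frob (X s) (D s))"
      unfolding frob_cnj unfolding frob_def by (simp add: sum.distrib)
    ultimately show ?thesis
      using assms(2) that by (simp add: has_vector_derivative_complex_iff)
  qed
  then obtain c where "\<forall>s\<in>{0..}. Re (frob (X s) (X s)) = c"
    using has_field_derivative_zero_constant[of "{0..}"] by blast
  then show ?thesis using assms(3) by simp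
qed

lemma is_dmm_solution_iff_matrix_field_solutions:
  fixes B :: "'n::finite \<Rightarrow> 'a::finite \<Rightarrow> 'b::finite \<Rightarrow> 'a \<Rightarrow> 'b \<Rightarrow> complex"
    and C :: "'n \<Rightarrow> 'c::finite \<Rightarrow> 'd::finite \<Rightarrow> 'c \<Rightarrow> 'd \<Rightarrow> complex"
  assumes "\<And>j t. 0 \<le> t \<Longrightarrow> T j t = tprod (U j t) (V j t)"
  shows "is_dmm_solution \<kappa>1 \<kappa>2 B C U V \<longleftrightarrow>
    matrix_field_solution \<kappa>1 \<kappa>2 B (\<lambda>j t. mean_gram1 (\<lambda>k. T k t) j) (\<lambda>j t. mean_gram2 (\<lambda>k. T k t) j) U \<and>
    matrix_field_solution \<kappa>1 \<kappa>2 C (\<lambda>j t. mean_gram3 (\<lambda>k. T k t) j) (\<lambda>j t. mean_gram4 (\<lambda>k. T k t) j) V"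
proof -
  have "u_field \<kappa>1 \<kappa>2 B (\<lambda>k. T k t) j (U j t) = dmm_rhs \<kappa>1 \<kappa>2 B (\<lambda>k. U k t) (\<lambda>k. V k t) j"
    and "v_field \<kappa>1 \<kappa>2 C (\<lambda>k. T k t) j (V j t) = dmm_rhs \<kappa>1 \<kappa>2 C (\<lambda>k. V k t) (\<lambda>k. U k t) j"
    if "0 \<le> t" for j t
    using u_field_tprod[where U = "\<lambda>k. U k t" and V = "\<lambda>k. V k t"]
      v_field_tprod[where U = "\<lambda>k. U k t" and V = "\<lambda>k. V k t"] assms[OF that] by simp_all
  then show ?thesis
    unfolding is_dmm_solution_def matrix_field_solution_def by auto
qed

lemma dmm_solution_frob_norm_constant:
  fixes B :: "'n::finite \<Rightarrow> 'a::finite \<Rightarrow> 'b::finite \<Rightarrow> 'a \<Rightarrow> 'b \<Rightarrow> complex"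
    and C :: "'n \<Rightarrow> 'c::finite \<Rightarrow> 'd::finite \<Rightarrow> 'c \<Rightarrow> 'd \<Rightarrow> complex"
  assumes "\<And>j a1 b1 a2 b2. B j a1 b1 a2 b2 = - cnj (B j a2 b2 a1 b1)"
    and "\<And>j c1 d1 c2 d2. C j c1 d1 c2 d2 = - cnj (C j c2 d2 c1 d1)"
    and dmm: "is_dmm_solution \<kappa>1 \<kappa>2 B C U V" and "0 \<le> t"
  shows "frob_norm (U j t) = frob_norm (U j 0)" and "frob_norm (V j t) = frob_norm (V j 0)"
proof -
  have "Re (frob (U j t) (U j t)) = Re (frob (U j 0) (U j 0))"
  proof (rule Re_frob_self_constant[where D = "\<lambda>t. dmm_rhs \<kappa>1 \<kappa>2 B (\<lambda>k. U k t) (\<lambda>k. V k t) j"])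
    show "((\<lambda>s. U j s a b) has_vector_derivative dmm_rhs \<kappa>1 \<kappa>2 B (\<lambda>k. U k s) (\<lambda>k. V k s) j a b)
        (at s within {0..})" if "0 \<le> s" for s a b
      using dmm that unfolding is_dmm_solution_def by blast
  qed (use Re_frob_dmm_rhs[OF assms(1)] \<open>0 \<le> t\<close> in auto)
  then show "frob_norm (U j t) = frob_norm (U j 0)" by (simp add: frob_norm_def)
  have "Re (frob (V j t) (V j t)) = Re (frob (V j 0) (V j 0))"
  proof (rule Re_frob_self_constant[where D = "\<lambda>t. dmm_rhs \<kappa>1 \<kappa>2 C (\<lambda>k. V k t) (\<lambda>k. U k t) j"])
    show "((\<lambda>s. V j s a b) has_vector_derivative dmm_rhs \<kappa>1 \<kappa>2 C (\<lambda>k. V k s) (\<lambda>k. U k s) j a b)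
        (at s within {0..})" if "0 \<le> s" for s a b
      using dmm that unfolding is_dmm_solution_def by blast
  qed (use Re_frob_dmm_rhs[OF assms(2)] \<open>0 \<le> t\<close> in auto)
  then show "frob_norm (V j t) = frob_norm (V j 0)" by (simp add: frob_norm_def)
qed

lemma dmm_solution_imp_lohe_solution:
  assumes "is_dmm_solution \<kappa>1 \<kappa>2 B C U V"
  shows "is_lohe_solution (dmm_kappa \<kappa>1 \<kappa>2) (dmm_A B C) (\<lambda>j t. tprod (U j t) (V j t))"
  unfolding is_lohe_solution_iff
  using assms is_dmm_solution_iff_matrix_field_solutions[of "\<lambda>j t. tprod (U j t) (V j t)"]
  by (blast intro: tprod_lohe_lin_solution)

lemma lohe_solution_separable:
  fixes B :: "'n::finite \<Rightarrow> 'a::finite \<Rightarrow> 'b::finite \<Rightarrow> 'a \<Rightarrow> 'b \<Rightarrow> complex"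
    and C :: "'n \<Rightarrow> 'c::finite \<Rightarrow> 'd::finite \<Rightarrow> 'c \<Rightarrow> 'd \<Rightarrow> complex"
  assumes lohe: "is_lohe_solution (dmm_kappa \<kappa>1 \<kappa>2) (dmm_A B C) T"
    and init: "\<And>j. T j 0 = tprod (U0 j) (V0 j)"
  obtains U V where "is_dmm_solution \<kappa>1 \<kappa>2 B C U V" "\<And>j. U j 0 = U0 j" "\<And>j. V j 0 = V0 j"
    "\<And>j t. 0 \<le> t \<Longrightarrow> T j t = tprod (U j t) (V j t)"
proof -
  note T_cont = continuous_on_lohe_solution[OF lohe]
  note gram_cont = continuous_on_mean_grams[where S = "{0..}" and T = T, OF T_cont]
  obtain U where U0: "\<And>j. U j 0 = U0 j" and U: "matrix_field_solution \<kappa>1 \<kappa>2 B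
      (\<lambda>j t. mean_gram1 (\<lambda>k. T k t) j) (\<lambda>j t. mean_gram2 (\<lambda>k. T k t) j) U"
    using matrix_field_solution_exists[where P = "\<lambda>j t. mean_gram1 (\<lambda>k. T k t) j"
        and Q = "\<lambda>j t. mean_gram2 (\<lambda>k. T k t) j", OF gram_cont(1,2)] by blast
  obtain V where V0: "\<And>j. V j 0 = V0 j" and V: "matrix_field_solution \<kappa>1 \<kappa>2 C
      (\<lambda>j t. mean_gram3 (\<lambda>k. T k t) j) (\<lambda>j t. mean_gram4 (\<lambda>k. T k t) j) V"
    using matrix_field_solution_exists[where P = "\<lambda>j t. mean_gram3 (\<lambda>k. T k t) j"
        and Q = "\<lambda>j t. mean_gram4 (\<lambda>k. T k t) j", OF gram_cont(3,4)] by blast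
  have T_eq: "T j t = tprod (U j t) (V j t)" if "0 \<le> t" for j t
    using lohe_lin_solution_unique[OF T_cont lohe[unfolded is_lohe_solution_iff]
        tprod_lohe_lin_solution[OF U V] _ that] init U0 V0 by simp
  show ?thesis
    using that is_dmm_solution_iff_matrix_field_solutions[where T = T and U = U and V = V, OF T_eq]
      U V U0 V0 T_eq by blast
qed

theorem proposition3p1:
  fixes \<kappa>1 \<kappa>2 :: real
    and B :: "'n::finite \<Rightarrow> 'a1::finite \<Rightarrow> 'a2::finite \<Rightarrow> 'a1 \<Rightarrow> 'a2 \<Rightarrow> complex"
    and C :: "'n \<Rightarrow> 'a3::finite \<Rightarrow> 'a4::finite \<Rightarrow> 'a3 \<Rightarrow> 'a4 \<Rightarrow> complex"
  assumes "\<kappa>1 \<ge> 0" and "\<kappa>2 \<ge> 0"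
    and "\<And>j a1 b1 a2 b2. B j a1 b1 a2 b2 = - cnj (B j a2 b2 a1 b1)"
    and "\<And>j c1 d1 c2 d2. C j c1 d1 c2 d2 = - cnj (C j c2 d2 c1 d1)"
  shows
    "(\<forall>(U :: 'n \<Rightarrow> real \<Rightarrow> ('a1, 'a2) cmat) (V :: 'n \<Rightarrow> real \<Rightarrow> ('a3, 'a4) cmat).
        is_dmm_solution \<kappa>1 \<kappa>2 B C U V \<longrightarrow>
        is_lohe_solution (dmm_kappa \<kappa>1 \<kappa>2) (dmm_A B C) (\<lambda>j t. tprod (U j t) (V j t)))
   \<and> (\<forall>(T :: 'n \<Rightarrow> real \<Rightarrow> ('a1, 'a2, 'a3, 'a4) tensor4) U0 V0.
        is_lohe_solution (dmm_kappa \<kappa>1 \<kappa>2) (dmm_A B C) T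
        \<and> (\<forall>j. T j 0 = tprod (U0 j) (V0 j))
        \<and> (\<forall>j. frob_norm (U0 j) = 1 \<and> frob_norm (V0 j) = 1)
        \<longrightarrow> (\<exists>U V. is_dmm_solution \<kappa>1 \<kappa>2 B C U V
                  \<and> (\<forall>j. U j 0 = U0 j \<and> V j 0 = V0 j)
                  \<and> (\<forall>j t. t > 0 \<longrightarrow> frob_norm (U j t) = 1 \<and> frob_norm (V j t) = 1
                                      \<and> T j t = tprod (U j t) (V j t))))"
proof (intro conjI allI impI)
  fix U :: "'n \<Rightarrow> real \<Rightarrow> ('a1, 'a2) cmat" and V :: "'n \<Rightarrow> real \<Rightarrow> ('a3, 'a4) cmat"
  assume "is_dmm_solution \<kappa>1 \<kappa>2 B C U V"
  then show "is_lohe_solution (dmm_kappa \<kappa>1 \<kappa>2) (dmm_A B C) (\<lambda>j t. tprod (U j t) (V j t))"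
    by (rule dmm_solution_imp_lohe_solution)
next
  fix T :: "'n \<Rightarrow> real \<Rightarrow> ('a1, 'a2, 'a3, 'a4) tensor4" and U0 V0
  assume "is_lohe_solution (dmm_kappa \<kappa>1 \<kappa>2) (dmm_A B C) T
    \<and> (\<forall>j. T j 0 = tprod (U0 j) (V0 j)) \<and> (\<forall>j. frob_norm (U0 j) = 1 \<and> frob_norm (V0 j) = 1)"
  then have lohe: "is_lohe_solution (dmm_kappa \<kappa>1 \<kappa>2) (dmm_A B C) T"
    and init: "\<And>j. T j 0 = tprod (U0 j) (V0 j)"
    and unit: "\<And>j. frob_norm (U0 j) = 1" "\<And>j. frob_norm (V0 j) = 1"
    by blast+
  obtain U V where dmm: "is_dmm_solution \<kappa>1 \<kappa>2 B C U V"
    and U0: "\<And>j. U j 0 = U0 j" and V0: "\<And>j. V j 0 = V0 j"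
    and T_eq: "\<And>j t. 0 \<le> t \<Longrightarrow> T j t = tprod (U j t) (V j t)"
    using lohe_solution_separable[OF lohe init] by blast
  have "frob_norm (U j t) = 1" "frob_norm (V j t) = 1" if "0 \<le> t" for j t
    using dmm_solution_frob_norm_constant[OF assms(3,4) dmm that] unit U0 V0 by simp_all
  with dmm U0 V0 T_eq show "\<exists>U V. is_dmm_solution \<kappa>1 \<kappa>2 B C U V
      \<and> (\<forall>j. U j 0 = U0 j \<and> V j 0 = V0 j)
      \<and> (\<forall>j t. t > 0 \<longrightarrow> frob_norm (U j t) = 1 \<and> frob_norm (V j t) = 1
                          \<and> T j t = tprod (U j t) (V j t))"
    by (intro exI[of _ U] exI[of _ V]) auto
qed

end
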